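(* Assume the setting below and sharp missingness: $M_i(1)=M_i(0)$ for all $1\le i\le n$. Fix $\boldsymbol\delta\in\mathbb R^n$ and $b\in\mathbb R$, and let $\boldsymbol w\in\mathbb R^n$ have coordinates $w_i=Y_i-\delta_iZ_i$ if $M_i=1$ and $w_i=b$ if $M_i=0$. Then $\tilde p^{\texttt c}_{\boldsymbol Z,\boldsymbol\delta,b}:=G_{\mathrm R,\phi}(t_{\mathrm R,\phi}(\boldsymbol Z,\boldsymbol w))$ is a valid p-value for $H_{\boldsymbol\delta}:\boldsymbol\tau=\boldsymbol\delta$: if $H_{\boldsymbol\delta}$ holds, $\mathbb P(\tilde p^{\texttt c}_{\boldsymbol Z,\boldsymbol\delta,b}\le\alpha)\le\alpha$ for all $\alpha\in(0,1)$.
   Context: There are $n$ units with fixed potential outcomes $Y_i^\star(0),Y_i^\star(1)\in\mathbb R$ and fixed potential missingness indicators $M_i(0),M_i(1)\in\{0,1\}$; $\tau_i=Y_i^\star(1)-Y_i^\star(0)$, $\boldsymbol\tau=(\tau_1,\dots,\tau_n)^\intercal$. $\boldsymbol Z\in\{0,1\}^n$ is from a completely randomized experiment (CRE): uniform over vectors with exactly $n_1$ ones ($n_1,n_0\ge1$ fixed, $n_1+n_0=n$), independent of all potential quantities; probabilities are over $\boldsymbol Z$. $M_i=Z_iM_i(1)+(1-Z_i)M_i(0)$; the realized outcome $Z_iY_i^\star(1)+(1-Z_i)Y_i^\star(0)$ is observed, denoted $Y_i$, iff $M_i=1$. $\psi_{i,j}(y,y')=\mathbf 1\{y>y'\}+\mathbf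 1\{y=y'\}\mathbf 1\{i\ge j\}$; $\mathrm{rank}_i(\boldsymbol y)=\sum_j\psi_{i,j}(y_i,y_j)$; $\phi$ nondecreasing real function on the nonnegative integers; $t_{\mathrm R,\phi}(\boldsymbol z,\boldsymbol y)$ is either $\sum_i z_i\phi(\mathrm{rank}_i(\boldsymbol y))$ or $\sum_i z_i\phi(\sum_j(1-z_j)\psi_{i,j}(y_i,y_j))$ (result holds for either); $G_{\mathrm R,\phi}(c)=\mathbb P(t_{\mathrm R,\phi}(\boldsymbol A,\boldsymbol y_0)\ge c)$ with $\boldsymbol A$ from the CRE and $\boldsymbol y_0\in\mathbb R^n$ any fixed vector (independent of $\boldsymbol y_0$). *)

theory Defs
  imports Complex_Main
begin

text \<open>Units are indexed by 0,...,n-1. Treatment vectors z :: nat => nat take values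
in {0,1} on {..<n} and are 0 outside.\<close>

definition CRE :: "nat \<Rightarrow> nat \<Rightarrow> (nat \<Rightarrow> nat) set" where
  "CRE n n1 = {z. (\<forall>i<n. z i \<in> {0,1}) \<and> (\<forall>i. n \<le> i \<longrightarrow> z i = 0) \<and> (\<Sum>i<n. z i) = n1}"

definition prob_CRE :: "nat \<Rightarrow> nat \<Rightarrow> ((nat \<Rightarrow> nat) \<Rightarrow> bool) \<Rightarrow> real" where
  "prob_CRE n n1 E = real (card {z \<in> CRE n n1. E z}) / real (card (CRE n n1))"

definition psi :: "nat \<Rightarrow> nat \<Rightarrow> real \<Rightarrow> real \<Rightarrow> nat" where
  "psi i j y y' = (if y > y' then 1 else if y = y' \<and> i \<ge> j then 1 else 0)"

definition rank :: "nat \<Rightarrow> (nat \<Rightarrow> real) \<Rightarrow> nat \<Rightarrow> nat" where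
  "rank n y i = (\<Sum>j<n. psi i j (y i) (y j))"

definition tR :: "bool \<Rightarrow> (nat \<Rightarrow> real) \<Rightarrow> nat \<Rightarrow> (nat \<Rightarrow> nat) \<Rightarrow> (nat \<Rightarrow> real) \<Rightarrow> real" where
  "tR v phi n z y =
     (if v then (\<Sum>i<n. real (z i) * phi (rank n y i))
      else (\<Sum>i<n. real (z i) * phi (\<Sum>j<n. (1 - z j) * psi i j (y i) (y j))))"

definition GR :: "bool \<Rightarrow> (nat \<Rightarrow> real) \<Rightarrow> nat \<Rightarrow> nat \<Rightarrow> (nat \<Rightarrow> real) \<Rightarrow> real \<Rightarrow> real" where
  "GR v phi n n1 y0 c = prob_CRE n n1 (\<lambda>A. tR v phi n A y0 \<ge> c)"

definition w_vec :: "(nat \<Rightarrow> real) \<Rightarrow> (nat \<Rightarrow> real) \<Rightarrow> (nat \<Rightarrow> bool) \<Rightarrow> (nat \<Rightarrow> bool)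
    \<Rightarrow> (nat \<Rightarrow> real) \<Rightarrow> real \<Rightarrow> (nat \<Rightarrow> nat) \<Rightarrow> nat \<Rightarrow> real" where
  "w_vec Y1 Y0 M1 M0 \<delta> b z i =
     (let Mi = (if z i = 1 then M1 i else M0 i);
          Yi = real (z i) * Y1 i + (1 - real (z i)) * Y0 i
      in if Mi then Yi - \<delta> i * real (z i) else b)"

end

theory Submission
  imports Defs "HOL-Combinatorics.Permutations" "HOL-Library.Product_Lexorder"
begin

text \<open>Under sharp missingness and \<open>H\<^sub>\<delta>\<close>, the imputed vector \<open>w\<close> no longer depends on
  the assignment: \<open>w\<^sub>i\<close> is \<open>Y\<^sub>i(0)\<close> if unit \<open>i\<close> is observed and \<open>b\<close> otherwise. So the
  p-value is \<open>G(T(Z))\<close> for the fixed statistic \<open>T(z) = t(z, u)\<close>. The rank statistic only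
  sees the pattern of comparisons \<open>\<psi>\<^sub>i\<^sub>j\<close>, which with ties broken by index is a strict total
  order; relabelling the units by their lexicographic ranks turns it into the pattern of
  the zero vector, and the design is invariant under relabelling. Hence \<open>G\<close> is also the
  survival function of \<open>T\<close> itself, and \<open>P(G(T) \<le> \<alpha>) \<le> \<alpha>\<close> is the elementary fact that
  a survival function evaluated at its own statistic is a valid p-value.\<close>

lemma survival_pvalue_valid:
  fixes T :: "'a \<Rightarrow> real"
  assumes fin: "finite S" and "0 \<le> \<alpha>"
  shows "real (card {s \<in> S. real (card {t \<in> S. T s \<le> T t}) / real (card S) \<le> \<alpha>})
           / real (card S) \<le> \<alpha>"
proof -
  define G where "G s = real (card {t \<in> S. T s \<le> T t}) / real (card S)" for s
  define E where "E = {s \<in> S. G s \<le> \<alpha>}"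
  have "finite E" using fin by (simp add: E_def)
  have "real (card E) / real (card S) \<le> \<alpha>"
  proof (cases "E = {}")
    case True
    then show ?thesis using \<open>0 \<le> \<alpha>\<close> by simp
  next
    case False
    have "Min (T ` E) \<in> T ` E" using \<open>finite E\<close> False by simp
    then obtain s0 where s0: "s0 \<in> E" "T s0 = Min (T ` E)" by auto
    have "E \<subseteq> {t \<in> S. T s0 \<le> T t}"
      using s0 \<open>finite E\<close> by (auto simp: E_def)
    then have "real (card E) / real (card S) \<le> G s0"
      unfolding G_def using fin by (intro divide_right_mono) (auto intro: card_mono)
    also have "\<dots> \<le> \<alpha>" using s0(1) by (simp add: E_def)
    finally show ?thesis .
  qed
  then show ?thesis unfolding E_def G_def .
qed

lemma finite_CRE: "finite (CRE n n1)"
proof (rule finite_subset)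
  show "CRE n n1 \<subseteq> {z. \<forall>i. (i \<in> {..<n} \<longrightarrow> z i \<in> {0,1}) \<and> (i \<notin> {..<n} \<longrightarrow> z i = 0)}"
    unfolding CRE_def by auto
qed (rule finite_set_of_finite_funs; simp)

lemma CRE_comp_permutes:
  assumes p: "p permutes {..<n}" and z: "z \<in> CRE n n1"
  shows "z \<circ> p \<in> CRE n n1"
proof -
  have "(\<Sum>i<n. (z \<circ> p) i) = (\<Sum>i<n. z i)" using sum.permute[OF p, of z] by simp
  then show ?thesis
    using z permutes_in_image[OF p] permutes_not_in[OF p] unfolding CRE_def by auto
qed

lemma psi_eq_lex: "psi i j y y' = (if (y', j) \<le> (y, i) then 1 else 0)"
  unfolding psi_def by (auto simp: less_eq_prod_def)

lemma tR_eq_weighted_sum: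
  "tR v phi n z y
     = (\<Sum>i<n. real (z i) * phi (\<Sum>j<n. (if v then 1 else 1 - z j) * psi i j (y i) (y j)))"
  unfolding tR_def rank_def by simp

lemma tR_cong: "(\<And>i. i < n \<Longrightarrow> y i = y' i) \<Longrightarrow> tR v phi n z y = tR v phi n z y'"
  unfolding tR_eq_weighted_sum by (auto intro!: sum.cong)

lemma tR_permutes:
  assumes p: "p permutes {..<n}"
    and pattern: "\<And>i j. i < n \<Longrightarrow> j < n \<Longrightarrow>
      psi (p i) (p j) (y' (p i)) (y' (p j)) = psi i j (y i) (y j)"
  shows "tR v phi n (z \<circ> inv p) y' = tR v phi n z y"
proof -
  have reindex: "(\<Sum>k<n. f k) = (\<Sum>i<n. f (p i))" for f :: "nat \<Rightarrow> 'a::comm_monoid_add"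
    using sum.permute[OF p, of f] by simp
  have inv_p: "inv p (p i) = i" for i
    using permutes_inverses(2)[OF p] by simp
  have inner: "(\<Sum>l<n. (if v then 1 else 1 - (z \<circ> inv p) l) * psi (p i) l (y' (p i)) (y' l))
      = (\<Sum>j<n. (if v then 1 else 1 - z j) * psi i j (y i) (y j))" if "i < n" for i
    by (subst reindex) (simp add: inv_p pattern that cong: if_cong)
  show ?thesis
    unfolding tR_eq_weighted_sum
    by (subst reindex) (simp add: inner inv_p)
qed

definition lex_rank :: "nat \<Rightarrow> (nat \<Rightarrow> 'a::linorder) \<Rightarrow> nat \<Rightarrow> nat" where
  "lex_rank n y i = (if i < n then card {j. j < n \<and> (y j, j) < (y i, i)} else i)"

lemma lex_rank_less:
  assumes "i < n" "j < n" "(y j, j) < (y i, i)"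
  shows "lex_rank n y j < lex_rank n y i"
proof -
  have "{k. k < n \<and> (y k, k) < (y j, j)} \<subset> {k. k < n \<and> (y k, k) < (y i, i)}"
    using assms by (auto intro: less_trans)
  then show ?thesis using assms by (simp add: lex_rank_def psubset_card_mono)
qed

lemma lex_rank_le_iff:
  assumes "i < n" "j < n"
  shows "lex_rank n y j \<le> lex_rank n y i \<longleftrightarrow> (y j, j) \<le> (y i, i)"
  using lex_rank_less[of i n j y] lex_rank_less[of j n i y] assms
  by (metis leD leI nle_le order.strict_iff_order prod.inject)

lemma lex_rank_permutes: "lex_rank n y permutes {..<n}"
proof (rule bij_imp_permutes)
  have "inj_on (lex_rank n y) {..<n}"
    by (rule inj_onI) (metis lex_rank_le_iff order.refl antisym prod.inject lessThan_iff)
  moreover have "lex_rank n y i < n" if "i < n" for i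
  proof -
    have "card {j. j < n \<and> (y j, j) < (y i, i)} \<le> card ({..<n} - {i})"
      by (intro card_mono) auto
    then show ?thesis using that by (simp add: lex_rank_def)
  qed
  ultimately show "bij_betw (lex_rank n y) {..<n} {..<n}"
    by (simp add: bij_betw_def endo_inj_surj image_subset_iff)
qed (simp add: lex_rank_def)

lemma psi_lex_rank:
  assumes "i < n" "j < n"
  shows "psi (lex_rank n y i) (lex_rank n y j) 0 0 = psi i j (y i) (y j)"
proof -
  have "psi (lex_rank n y i) (lex_rank n y j) 0 0
      = (if lex_rank n y j \<le> lex_rank n y i then 1 else 0)"
    by (simp add: psi_def)
  also have "\<dots> = (if (y j, j) \<le> (y i, i) then 1 else 0)"
    by (simp only: lex_rank_le_iff[OF assms])
  finally show ?thesis by (simp only: psi_eq_lex)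
qed

lemma card_tR_ge_eq_zero_vector:
  "card {z \<in> CRE n n1. c \<le> tR v phi n z y} = card {z \<in> CRE n n1. c \<le> tR v phi n z (\<lambda>_. 0)}"
proof -
  define p where "p = lex_rank n y"
  have p: "p permutes {..<n}" by (simp add: p_def lex_rank_permutes)
  have tR_eq: "tR v phi n (z \<circ> inv p) (\<lambda>_. 0) = tR v phi n z y" for z
    by (rule tR_permutes[OF p]) (simp add: p_def psi_lex_rank)
  have tR_eq': "tR v phi n (z \<circ> p) y = tR v phi n z (\<lambda>_. 0)" for z
    using tR_eq[of "z \<circ> p"] by (simp add: comp_assoc permutes_inv_o[OF p])
  have "bij_betw (\<lambda>z. z \<circ> inv p)
      {z \<in> CRE n n1. c \<le> tR v phi n z y} {z \<in> CRE n n1. c \<le> tR v phi n z (\<lambda>_. 0)}"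
  proof (rule bij_betwI[where g = "\<lambda>z. z \<circ> p"])
    show "z \<circ> inv p \<circ> p = z" "z \<circ> p \<circ> inv p = z" for z
      by (simp_all add: comp_assoc permutes_inv_o[OF p])
  qed (use CRE_comp_permutes[OF p] CRE_comp_permutes[OF permutes_inv[OF p]] tR_eq tR_eq'
       in auto)
  then show ?thesis by (rule bij_betw_same_card)
qed

lemma GR_independent_of_vector: "GR v phi n n1 y c = GR v phi n n1 y' c"
  unfolding GR_def prob_CRE_def
  by (simp only: card_tR_ge_eq_zero_vector[of n n1 c v phi y]
                 card_tR_ge_eq_zero_vector[of n n1 c v phi y'])

lemma w_vec_sharp_null:
  assumes "z \<in> CRE n n1" "i < n" "M1 i = M0 i" "Y1 i - Y0 i = \<delta> i"
  shows "w_vec Y1 Y0 M1 M0 \<delta> b z i = (if M0 i then Y0 i else b)"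
proof -
  have "z i = 0 \<or> z i = 1" using assms(1,2) unfolding CRE_def by auto
  then show ?thesis
    using assms(3,4) unfolding w_vec_def Let_def by (auto simp: algebra_simps)
qed

theorem proposition1:
  fixes n n1 :: nat and Y1 Y0 :: "nat \<Rightarrow> real" and M1 M0 :: "nat \<Rightarrow> bool"
    and \<delta> :: "nat \<Rightarrow> real" and b :: real and phi :: "nat \<Rightarrow> real"
    and v :: bool and y0 :: "nat \<Rightarrow> real" and \<alpha> :: real
  assumes "1 \<le> n1" and "n1 < n"
    and "mono phi"
    and sharp: "\<forall>i<n. M1 i = M0 i"
    and H: "\<forall>i<n. Y1 i - Y0 i = \<delta> i"
    and "0 < \<alpha>" and "\<alpha> < 1"
  shows "prob_CRE n n1
           (\<lambda>Z. GR v phi n n1 y0 (tR v phi n Z (w_vec Y1 Y0 M1 M0 \<delta> b Z)) \<le> \<alpha>) \<le> \<alpha>"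
proof -
  define u where "u i = (if M0 i then Y0 i else b)" for i
  define T where "T z = tR v phi n z u" for z
  have "tR v phi n Z (w_vec Y1 Y0 M1 M0 \<delta> b Z) = T Z" if "Z \<in> CRE n n1" for Z
    unfolding T_def u_def using w_vec_sharp_null[OF that] sharp H by (intro tR_cong) auto
  moreover have "GR v phi n n1 y0 c
      = real (card {t \<in> CRE n n1. c \<le> T t}) / real (card (CRE n n1))" for c
    unfolding GR_independent_of_vector[of v phi n n1 y0 c u] by (simp add: GR_def prob_CRE_def T_def)
  ultimately have "{Z \<in> CRE n n1. GR v phi n n1 y0 (tR v phi n Z (w_vec Y1 Y0 M1 M0 \<delta> b Z)) \<le> \<alpha>}
      = {s \<in> CRE n n1. real (card {t \<in> CRE n n1. T s \<le> T t}) / real (card (CRE n n1)) \<le> \<alpha>}"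
    by auto
  then show ?thesis
    unfolding prob_CRE_def using survival_pvalue_valid[OF finite_CRE, of \<alpha> n n1 T] \<open>0 < \<alpha>\<close>
    by simp
qed

end
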